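(* Let $(\breve{r}^{(k)})_{k\ge 0}$ be independent real-valued random variables with $\Pr(\breve{r}^{(k)}<0)=\Pr(\breve{r}^{(k)}>0)=\tfrac12$ for all $k$, and for $k\ge1$ let $\psi^{(k)}=1$ if $\mathrm{sgn}(\breve{r}^{(k)})=-\mathrm{sgn}(\breve{r}^{(k-1)})$ and $\psi^{(k)}=0$ otherwise. Fix an integer $\ell\ge 10$ and define the Memoryless Runtime Estimator $$\hat H^{(0)}=\tfrac12,\qquad \hat H^{(k)}=\hat H^{(k-1)}+\frac{\psi^{(k)}-\hat H^{(k-1)}}{\ell},\quad k\ge1.$$ Then the (steady-state) variance of the sign-switching rate estimate is $$\mathrm{Var}[H]=\lim_{k\to\infty}\mathrm{Var}[\hat H^{(k)}]=\frac{\mathbb{E}[H](1-\mathbb{E}[H])}{2\ell-1}=\frac{1}{4(2\ell-1)},$$ where $\mathbb{E}[H]=\tfrac12$ is the expected sign-switching rate.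
   Context: This models a monitoring vehicle $i$ observing a neighbor vehicle $j$ that follows a "hidden" virtual spring-damper control model. $\breve{r}^{(k)}$ is the hidden velocity residual (received velocity magnitude of $j$ minus its prediction under the hidden model), modeled under the hidden model as a random sequence with positive and negative values each of probability $\tfrac12$; $\psi^{(k)}$ is the alarm indicating a sign switch at time $k$; $\ell$ is the "pseudo-window" length of the estimator and $\hat H^{(k)}\in[0,1]$ is the run-time estimate of the sign-switching alarm rate. *)

theory Defs
  imports "HOL-Probability.Probability"
begin

text \<open>Sign-switch alarm: for k \<ge> 1, psi k = 1 iff sgn (r k) = - sgn (r (k-1)), else 0.
  (The value at k = 0 is never used.)\<close>
definition sign_switch :: "(nat \<Rightarrow> 'a \<Rightarrow> real) \<Rightarrow> nat \<Rightarrow> 'a \<Rightarrow> real" where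
  "sign_switch r k \<omega> = (if sgn (r k \<omega>) = - sgn (r (k - 1) \<omega>) then 1 else 0)"

primrec mre :: "nat \<Rightarrow> (nat \<Rightarrow> 'a \<Rightarrow> real) \<Rightarrow> nat \<Rightarrow> 'a \<Rightarrow> real" where
  "mre l psi 0 \<omega> = 1 / 2"
| "mre l psi (Suc k) \<omega> = mre l psi k \<omega> + (psi (Suc k) \<omega> - mre l psi k \<omega>) / real l"

end

theory Submission
  imports Defs
begin

text \<open>Centre the estimate: \<open>D k = H k - 1/2\<close> satisfies
  \<open>D (k+1) = (1 - 1/l) D k + (\<psi> (k+1) - 1/2) / l\<close>. Off a null set,
  \<open>\<psi> (k+1) - 1/2 = - sgn (r (k+1)) sgn (r k) / 2\<close>, and \<open>sgn (r (k+1))\<close> has mean zero and is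
  independent of \<open>r 0, ..., r k\<close>; so the centred alarm is orthogonal to every bounded function of
  the past, in particular to \<open>D k\<close>. Hence \<open>E (D k) = 0\<close> and, as the centred alarm squares to 1/4,
  the variance obeys \<open>V (k+1) = (1 - 1/l)\<^sup>2 V k + 1/(4 l\<^sup>2)\<close>, whose fixed point is
  \<open>1/(4 (2 l - 1))\<close>.\<close>

lemma mre_cong:
  assumes "\<And>i. i \<le> k \<Longrightarrow> psi i x = psi' i y"
  shows "mre l psi k x = mre l psi' k y"
  using assms by (induction k) auto

lemma mre_sign_switch_restrict:
  "mre l (sign_switch r) k \<omega> = mre l (sign_switch (\<lambda>i f. f i)) k (\<lambda>i\<in>{..k}. r i \<omega>)"
  by (rule mre_cong) (auto simp: sign_switch_def)

lemma mre_centred_Suc: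
  "mre l psi (Suc k) x - 1/2
     = (1 - 1 / real l) * (mre l psi k x - 1/2) + (psi (Suc k) x - 1/2) / real l"
  by (cases "l = 0") (simp_all add: field_simps)

lemma mre_in_unit_interval:
  assumes "\<And>k x. 0 \<le> psi k x \<and> psi k x \<le> 1"
  shows "0 \<le> mre l psi k x \<and> mre l psi k x \<le> 1"
proof (induction k)
  case (Suc k)
  define h p where "h = mre l psi k x" and "p = psi (Suc k) x"
  have hp: "0 \<le> h" "h \<le> 1" "0 \<le> p" "p \<le> 1"
    using Suc assms unfolding h_def p_def by auto
  show ?case
  proof (cases "l = 0")
    case False
    define a where "a = 1 / real l"
    have a: "0 \<le> a" "a \<le> 1"
      using False by (auto simp: a_def)
    have "mre l psi (Suc k) x = (1 - a) * h + a * p"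
      using False by (simp add: h_def p_def a_def field_simps)
    moreover have "(1 - a) * h \<le> 1 - a" "a * p \<le> a"
      using a hp by (auto intro: mult_left_le)
    ultimately show ?thesis
      using a hp by simp
  qed (use hp in \<open>simp add: h_def\<close>)
qed simp

lemma mre_sign_switch_in_unit_interval:
  "0 \<le> mre l (sign_switch r) k x \<and> mre l (sign_switch r) k x \<le> 1"
  by (rule mre_in_unit_interval) (simp add: sign_switch_def)

lemma sign_switch_centred_eq_sgn:
  assumes "r k x \<noteq> 0" and "r (Suc k) x \<noteq> 0"
  shows "sign_switch r (Suc k) x - 1/2 = - (sgn (r (Suc k) x) * sgn (r k x)) / 2"
  using assms by (auto simp: sign_switch_def sgn_if)

lemma borel_measurable_sign_switch:
  assumes "r k \<in> borel_measurable N" and "r (k - 1) \<in> borel_measurable N"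
  shows "sign_switch r k \<in> borel_measurable N"
proof -
  have "sign_switch r k = (\<lambda>x. if sgn (r k x) = - sgn (r (k - 1) x) then 1 else 0)"
    by (simp add: fun_eq_iff sign_switch_def)
  also have "\<dots> \<in> borel_measurable N"
    using assms by measurable
  finally show ?thesis .
qed

lemma borel_measurable_mre_sign_switch:
  assumes "\<And>i. i \<le> k \<Longrightarrow> r i \<in> borel_measurable N"
  shows "mre l (sign_switch r) k \<in> borel_measurable N"
  using assms
proof (induction k)
  case 0
  have "mre l (sign_switch r) 0 = (\<lambda>_. 1/2)"
    by (simp add: fun_eq_iff)
  then show ?case
    by simp
next
  case (Suc k)
  have [measurable]: "mre l (sign_switch r) k \<in> borel_measurable N"
    "sign_switch r (Suc k) \<in> borel_measurable N"
    using Suc by (auto intro: borel_measurable_sign_switch)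
  have "mre l (sign_switch r) (Suc k) = (\<lambda>x. mre l (sign_switch r) k x
      + (sign_switch r (Suc k) x - mre l (sign_switch r) k x) / real l)"
    by (simp add: fun_eq_iff)
  also have "\<dots> \<in> borel_measurable N"
    by measurable
  finally show ?case .
qed

lemma LIMSEQ_affine_recurrence:
  fixes x :: "nat \<Rightarrow> real"
  assumes "\<bar>b\<bar> < 1" and "\<And>k. x (Suc k) = b * x k + c"
  shows "x \<longlonglongrightarrow> c / (1 - b)"
proof -
  define L where "L = c / (1 - b)"
  have "1 - b \<noteq> 0"
    using assms(1) by auto
  then have "c = (1 - b) * L"
    by (simp add: L_def)
  then have step: "x (Suc k) - L = b * (x k - L)" for k
    using assms(2)[of k] by (simp add: algebra_simps)
  have "x k - L = b ^ k * (x 0 - L)" for k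
    by (induction k) (simp_all add: step mult.assoc)
  then have "x = (\<lambda>k. L + b ^ k * (x 0 - L))"
    by (auto simp: fun_eq_iff algebra_simps)
  moreover have "(\<lambda>k. L + b ^ k * (x 0 - L)) \<longlonglongrightarrow> L + 0 * (x 0 - L)"
    using assms(1) by (intro tendsto_intros) simp
  ultimately show ?thesis
    by (simp add: L_def)
qed

lemma (in finite_measure) integrable_bounded:
  fixes f :: "'a \<Rightarrow> real"
  assumes "f \<in> borel_measurable M" and "\<And>x. \<bar>f x\<bar> \<le> B"
  shows "integrable M f"
  using assms by (intro integrable_const_bound[where B=B]) auto

locale symmetric_sign_process = prob_space M for M :: "'a measure" +
  fixes r :: "nat \<Rightarrow> 'a \<Rightarrow> real"
  assumes indep_r: "indep_vars (\<lambda>_. borel) r UNIV"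
    and prob_r_neg: "\<And>k. prob {\<omega> \<in> space M. r k \<omega> < 0} = 1/2"
    and prob_r_pos: "\<And>k. prob {\<omega> \<in> space M. r k \<omega> > 0} = 1/2"
begin

lemma borel_measurable_r [measurable]: "r k \<in> borel_measurable M"
  using indep_r by (auto simp: indep_vars_def)

lemma measurable_restrict_r [measurable]:
  "(\<lambda>\<omega>. \<lambda>i\<in>J. r i \<omega>) \<in> measurable M (PiM J (\<lambda>_. borel))"
  by (intro measurable_restrict) simp

lemma borel_measurable_sign_switch_r [measurable]: "sign_switch r k \<in> borel_measurable M"
  by (rule borel_measurable_sign_switch) simp_all

lemma integrable_sign_switch: "integrable M (sign_switch r k)"
  by (rule integrable_bounded[where B=1]) (auto simp: sign_switch_def)

lemma integrable_mre: "integrable M (mre l (sign_switch r) k)"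
proof (rule integrable_bounded[where B=1])
  show "mre l (sign_switch r) k \<in> borel_measurable M"
    by (rule borel_measurable_mre_sign_switch) simp
  show "\<bar>mre l (sign_switch r) k \<omega>\<bar> \<le> 1" for \<omega>
    using mre_sign_switch_in_unit_interval[of l r k \<omega>] by auto
qed

lemma AE_r_nonzero: "AE \<omega> in M. r k \<omega> \<noteq> 0"
proof -
  let ?N = "{\<omega> \<in> space M. r k \<omega> < 0}" and ?P = "{\<omega> \<in> space M. r k \<omega> > 0}"
  have "prob (?N \<union> ?P) = 1"
    using prob_r_neg[of k] prob_r_pos[of k] by (subst finite_measure_Union) auto
  moreover have "?N \<union> ?P = {\<omega> \<in> space M. r k \<omega> \<noteq> 0}"
    by auto
  moreover have "{\<omega> \<in> space M. r k \<omega> \<noteq> 0} \<in> events"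
    by measurable
  ultimately show ?thesis
    using prob_Collect_eq_1 by simp
qed

lemma expectation_sgn_r: "expectation (\<lambda>\<omega>. sgn (r k \<omega>)) = 0"
proof -
  let ?N = "{\<omega> \<in> space M. r k \<omega> < 0}" and ?P = "{\<omega> \<in> space M. r k \<omega> > 0}"
  have "?N \<in> events" and "?P \<in> events"
    by (measurable, measurable)
  have "expectation (\<lambda>\<omega>. sgn (r k \<omega>)) = expectation (\<lambda>\<omega>. indicator ?P \<omega> - indicator ?N \<omega>)"
    by (intro Bochner_Integration.integral_cong) (auto simp: sgn_if indicator_def)
  also have "\<dots> = prob ?P - prob ?N"
    using \<open>?N \<in> events\<close> \<open>?P \<in> events\<close>
    by (subst Bochner_Integration.integral_diff) (auto simp: emeasure_finite less_top[symmetric])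
  finally show ?thesis
    by (simp add: prob_r_neg prob_r_pos)
qed

lemma expectation_sgn_r_times_indep:
  fixes g :: "(nat \<Rightarrow> real) \<Rightarrow> real"
  assumes "n \<notin> J" and g: "g \<in> borel_measurable (PiM J (\<lambda>_. borel))"
    and g_bounded: "\<And>f. \<bar>g f\<bar> \<le> B"
  shows "expectation (\<lambda>\<omega>. sgn (r n \<omega>) * g (\<lambda>i\<in>J. r i \<omega>)) = 0"
proof -
  have indep_restrict: "indep_var (PiM {n} (\<lambda>_. borel)) (\<lambda>\<omega>. \<lambda>i\<in>{n}. r i \<omega>) (PiM J (\<lambda>_. borel)) (\<lambda>\<omega>. \<lambda>i\<in>J. r i \<omega>)"
    using \<open>n \<notin> J\<close> by (intro indep_var_restrict[OF indep_r]) auto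
  have sgn_coordinate: "(\<lambda>f :: nat \<Rightarrow> real. sgn (f n)) \<in> borel_measurable (PiM {n} (\<lambda>_. borel))"
    using measurable_compose[OF measurable_component_singleton[of n "{n}" "\<lambda>_. borel"] borel_measurable_sgn]
    by simp
  have "indep_var borel (\<lambda>\<omega>. sgn (r n \<omega>)) borel (\<lambda>\<omega>. g (\<lambda>i\<in>J. r i \<omega>))"
    using indep_var_compose[OF indep_restrict sgn_coordinate g] by (simp add: comp_def)
  moreover have "integrable M (\<lambda>\<omega>. sgn (r n \<omega>))"
    by (rule integrable_bounded[where B=1]) (auto simp: sgn_if)
  moreover have "integrable M (\<lambda>\<omega>. g (\<lambda>i\<in>J. r i \<omega>))"
  proof (rule integrable_bounded)
    show "(\<lambda>\<omega>. g (\<lambda>i\<in>J. r i \<omega>)) \<in> borel_measurable M"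
      using measurable_comp[OF measurable_restrict_r g] by (simp add: comp_def)
  qed (rule g_bounded)
  ultimately show ?thesis
    by (simp add: indep_var_lebesgue_integral expectation_sgn_r)
qed

lemma expectation_centred_sign_switch_times_past:
  fixes g :: "(nat \<Rightarrow> real) \<Rightarrow> real"
  assumes g: "g \<in> borel_measurable (PiM {..k} (\<lambda>_. borel))"
    and g_bounded: "\<And>f. \<bar>g f\<bar> \<le> B"
  shows "expectation (\<lambda>\<omega>. (sign_switch r (Suc k) \<omega> - 1/2) * g (\<lambda>i\<in>{..k}. r i \<omega>)) = 0"
proof -
  define h where "h f = sgn (f k) * g f" for f :: "nat \<Rightarrow> real"
  have g_r [measurable]: "(\<lambda>\<omega>. g (\<lambda>i\<in>{..k}. r i \<omega>)) \<in> borel_measurable M"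
    using measurable_comp[OF measurable_restrict_r g] by (simp add: comp_def)
  have h: "h \<in> borel_measurable (PiM {..k} (\<lambda>_. borel))"
    unfolding h_def using measurable_component_singleton[of k "{..k}" "\<lambda>_. borel"] g by measurable
  have h_r [measurable]: "(\<lambda>\<omega>. h (\<lambda>i\<in>{..k}. r i \<omega>)) \<in> borel_measurable M"
    using measurable_comp[OF measurable_restrict_r h] by (simp add: comp_def)
  have h_bounded: "\<bar>h f\<bar> \<le> B" for f
    using g_bounded[of f] by (auto simp: h_def abs_mult sgn_if)
  have AE_eq: "AE \<omega> in M. (sign_switch r (Suc k) \<omega> - 1/2) * g (\<lambda>i\<in>{..k}. r i \<omega>)
      = - (sgn (r (Suc k) \<omega>) * h (\<lambda>i\<in>{..k}. r i \<omega>)) / 2"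
    using AE_r_nonzero[of k] AE_r_nonzero[of "Suc k"]
    by eventually_elim (simp add: sign_switch_centred_eq_sgn h_def)
  have "expectation (\<lambda>\<omega>. (sign_switch r (Suc k) \<omega> - 1/2) * g (\<lambda>i\<in>{..k}. r i \<omega>))
      = expectation (\<lambda>\<omega>. - (sgn (r (Suc k) \<omega>) * h (\<lambda>i\<in>{..k}. r i \<omega>)) / 2)"
    by (rule integral_cong_AE[OF _ _ AE_eq]; measurable)
  also have "\<dots> = 0"
    using expectation_sgn_r_times_indep[OF _ h h_bounded] by simp
  finally show ?thesis .
qed

lemma expectation_sign_switch: "expectation (sign_switch r (Suc k)) = 1/2"
  using expectation_centred_sign_switch_times_past[of "\<lambda>_. 1" k 1]
  by (simp add: integrable_sign_switch prob_space)

lemma expectation_mre: "expectation (mre l (sign_switch r) k) = 1/2"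
proof (induction k)
  case 0
  have "mre l (sign_switch r) 0 = (\<lambda>_. 1/2)"
    by (simp add: fun_eq_iff)
  then show ?case
    by (simp add: prob_space)
next
  case (Suc k)
  have "mre l (sign_switch r) (Suc k) = (\<lambda>\<omega>. mre l (sign_switch r) k \<omega>
      + (sign_switch r (Suc k) \<omega> - mre l (sign_switch r) k \<omega>) / real l)"
    by (simp add: fun_eq_iff)
  then show ?case
    using Suc by (simp add: integrable_mre integrable_sign_switch expectation_sign_switch)
qed

lemma expectation_centred_sign_switch_times_mre:
  "expectation (\<lambda>\<omega>. (sign_switch r (Suc k) \<omega> - 1/2) * (mre l (sign_switch r) k \<omega> - 1/2)) = 0"
proof -
  let ?G = "\<lambda>f. mre l (sign_switch (\<lambda>i f. f i)) k f - 1/2"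
  have "?G \<in> borel_measurable (PiM {..k} (\<lambda>_. borel))"
    using borel_measurable_mre_sign_switch[of k "\<lambda>i f. f i" "PiM {..k} (\<lambda>_. borel)" l]
    by (simp add: measurable_component_singleton)
  moreover have "\<bar>?G f\<bar> \<le> 1" for f
    using mre_sign_switch_in_unit_interval[of l "\<lambda>i f. f i" k f] by auto
  ultimately show ?thesis
    using expectation_centred_sign_switch_times_past[of ?G k 1]
    by (simp add: mre_sign_switch_restrict[symmetric])
qed

lemma variance_mre_Suc:
  "variance (mre l (sign_switch r) (Suc k))
     = (1 - 1 / real l)\<^sup>2 * variance (mre l (sign_switch r) k) + 1 / (4 * (real l)\<^sup>2)"
proof -
  define a where "a = 1 / real l"
  define D where "D j \<omega> = mre l (sign_switch r) j \<omega> - 1/2" for j \<omega>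
  define e where "e \<omega> = sign_switch r (Suc k) \<omega> - 1/2" for \<omega>
  have variance_eq: "variance (mre l (sign_switch r) j) = expectation (\<lambda>\<omega>. (D j \<omega>)\<^sup>2)" for j
    by (simp add: expectation_mre D_def)
  have e_square: "(e \<omega>)\<^sup>2 = 1/4" for \<omega>
    by (simp add: e_def sign_switch_def power2_eq_square)
  have D_Suc: "D (Suc k) \<omega> = (1 - a) * D k \<omega> + a * e \<omega>" for \<omega>
    unfolding D_def e_def a_def mre_centred_Suc by simp
  have D_Suc_square: "(D (Suc k) \<omega>)\<^sup>2 = (1 - a)\<^sup>2 * (D k \<omega>)\<^sup>2 + 2 * a * (1 - a) * (e \<omega> * D k \<omega>) + a\<^sup>2 / 4" for \<omega>
  proof -
    have "((1 - a) * x + a * y)\<^sup>2 = (1 - a)\<^sup>2 * x\<^sup>2 + 2 * a * (1 - a) * (y * x) + a\<^sup>2 * y\<^sup>2" for x y :: real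
      by (simp add: power2_eq_square algebra_simps)
    then show ?thesis
      by (simp add: D_Suc e_square)
  qed
  have D_bounded: "\<bar>D j \<omega>\<bar> \<le> 1" for j \<omega>
    using mre_sign_switch_in_unit_interval[of l r j \<omega>] by (auto simp: D_def)
  have [measurable]: "D j \<in> borel_measurable M" "e \<in> borel_measurable M" for j
    unfolding D_def e_def using borel_measurable_mre_sign_switch[of j r M l] by measurable
  have D_square_integrable: "integrable M (\<lambda>\<omega>. (D k \<omega>)\<^sup>2)"
    using D_bounded[of k] by (intro integrable_bounded[where B=1]) (auto simp: abs_square_le_1)
  have eD_integrable: "integrable M (\<lambda>\<omega>. e \<omega> * D k \<omega>)"
  proof (rule integrable_bounded[where B=1])
    show "(\<lambda>\<omega>. e \<omega> * D k \<omega>) \<in> borel_measurable M"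
      by measurable
    show "\<bar>e \<omega> * D k \<omega>\<bar> \<le> 1" for \<omega>
      using D_bounded[of k \<omega>] by (auto simp: abs_mult e_def sign_switch_def)
  qed
  have orthogonal: "expectation (\<lambda>\<omega>. e \<omega> * D k \<omega>) = 0"
    unfolding e_def D_def by (rule expectation_centred_sign_switch_times_mre)
  have "variance (mre l (sign_switch r) (Suc k))
      = expectation (\<lambda>\<omega>. (1 - a)\<^sup>2 * (D k \<omega>)\<^sup>2 + 2 * a * (1 - a) * (e \<omega> * D k \<omega>) + a\<^sup>2 / 4)"
    by (simp only: variance_eq D_Suc_square)
  also have "\<dots> = (1 - a)\<^sup>2 * expectation (\<lambda>\<omega>. (D k \<omega>)\<^sup>2)
      + 2 * a * (1 - a) * expectation (\<lambda>\<omega>. e \<omega> * D k \<omega>) + a\<^sup>2 / 4"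
    using D_square_integrable eD_integrable by (simp add: prob_space)
  also have "\<dots> = (1 - a)\<^sup>2 * variance (mre l (sign_switch r) k) + a\<^sup>2 / 4"
    by (simp add: orthogonal variance_eq)
  finally show ?thesis
    by (simp add: a_def power_divide)
qed

end

theorem lemma3:
  fixes M :: "'a measure" and r :: "nat \<Rightarrow> 'a \<Rightarrow> real" and l :: nat
  assumes "prob_space M"
    and "prob_space.indep_vars M (\<lambda>_. borel) r UNIV"
    and "\<And>k. measure M {\<omega> \<in> space M. r k \<omega> < 0} = 1 / 2"
    and "\<And>k. measure M {\<omega> \<in> space M. r k \<omega> > 0} = 1 / 2"
    and "l \<ge> 10"
  defines "H \<equiv> mre l (sign_switch r)"
  shows "(\<lambda>k. prob_space.expectation M (H k)) \<longlonglongrightarrow> 1 / 2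
    \<and> (\<lambda>k. prob_space.variance M (H k)) \<longlonglongrightarrow> (1 / 2) * (1 - 1 / 2) / (2 * real l - 1)
    \<and> (1 / 2 :: real) * (1 - 1 / 2) / (2 * real l - 1) = 1 / (4 * (2 * real l - 1))"
proof -
  interpret symmetric_sign_process M r
    by (intro symmetric_sign_process.intro symmetric_sign_process_axioms.intro) (use assms in auto)
  have l: "real l \<ge> 1"
    using \<open>l \<ge> 10\<close> by simp
  have "\<bar>(1 - 1 / real l)\<^sup>2\<bar> < 1"
    using l by (simp add: abs_square_less_1)
  then have "(\<lambda>k. variance (H k)) \<longlonglongrightarrow> 1 / (4 * (real l)\<^sup>2) / (1 - (1 - 1 / real l)\<^sup>2)"
    unfolding H_def by (rule LIMSEQ_affine_recurrence) (rule variance_mre_Suc)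
  moreover have "1 / (4 * (real l)\<^sup>2) / (1 - (1 - 1 / real l)\<^sup>2) = (1 / 2) * (1 - 1 / 2) / (2 * real l - 1)"
    using l by (simp add: field_simps power2_eq_square)
  ultimately show ?thesis
    by (simp add: H_def expectation_mre)
qed

end
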